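(* Let $p_1,\dots,p_k$ be finitely many distinct primes. Then the complex numbers $\ln(\gamma_{p_1}),\dots,\ln(\gamma_{p_k})$ are linearly independent over $\mathbb{Q}$.
   Context: For a prime $p$, define $$\gamma_p := i\cdot\frac{2^{p-1}-1}{2^{p-1}}+\frac{1}{2^{p-1}}\sqrt{2^p-1}.$$ Here $\ln$ is the principal branch of the complex logarithm. With this choice, $\ln(\gamma_p)= i\arccos(1-2^{-p+1})$ holds. *)

theory Defs
  imports "HOL-Analysis.Analysis"
begin

definition gamma_p :: "nat \<Rightarrow> complex" where
  "gamma_p p = \<i> * complex_of_real ((2 ^ (p - 1) - 1) / 2 ^ (p - 1))
             + complex_of_real (sqrt (2 ^ p - 1) / 2 ^ (p - 1))"

end

theory Submission
  imports Defs "HOL-Computational_Algebra.Nth_Powers" "HOL-Number_Theory.Pocklington"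
begin

(* Clearing denominators turns a rational relation among the Ln (gamma_p p) into
   prod gamma_p p ^ n p = 1 with integer exponents.  Fix p >= 3.  Adjoining to Q(i) the square
   roots of the pairwise coprime non-squares 2^r - 1 (r ~= p) gives a field K containing every
   gamma_p r with r ~= p but not sqrt (2^p - 1).  So gamma_p p ^ |n p| lies in K and is fixed by
   the conjugation sqrt (2^p - 1) |-> - sqrt (2^p - 1), which maps gamma_p p to - cnj (gamma_p p);
   since |gamma_p p| = 1, gamma_p p would be a root of unity unless n p = 0.  It is not one:
   w = gamma_p p ^ 2 satisfies |w| = 1 and w + cnj w = (odd integer) / (even integer), and a
   parity argument on the Lucas sequence V_M = d^M (w^M + cnj w^M) rules out w^M = 1.
   For p = 2, gamma_p 2 is a root of unity, but Ln (gamma_p 2) ~= 0 finishes the proof. *)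

definition quad_ext :: "'a::field set \<Rightarrow> 'a \<Rightarrow> 'a set" where
  "quad_ext K s = {x + y * s |x y. x \<in> K \<and> y \<in> K}"

lemma quad_ext_memI: "x \<in> K \<Longrightarrow> y \<in> K \<Longrightarrow> x + y * s \<in> quad_ext K s"
  by (auto simp: quad_ext_def)

lemma quad_ext_memE:
  assumes "z \<in> quad_ext K s"
  obtains x y where "x \<in> K" "y \<in> K" "z = x + y * s"
  using assms by (auto simp: quad_ext_def)

lemma subset_quad_ext: "0 \<in> K \<Longrightarrow> K \<subseteq> quad_ext K s"
  using quad_ext_memI[of _ K 0 s] by auto

lemma generator_in_quad_ext: "0 \<in> K \<Longrightarrow> 1 \<in> K \<Longrightarrow> s \<in> quad_ext K s"
  using quad_ext_memI[of 0 K 1 s] by simp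

locale subfield_set =
  fixes K :: "'a :: field set"
  assumes one_mem [simp]: "1 \<in> K"
    and diff_mem: "x \<in> K \<Longrightarrow> y \<in> K \<Longrightarrow> x - y \<in> K"
    and mult_mem: "x \<in> K \<Longrightarrow> y \<in> K \<Longrightarrow> x * y \<in> K"
    and inverse_mem: "x \<in> K \<Longrightarrow> inverse x \<in> K"
begin

lemma zero_mem [simp]: "0 \<in> K"
  using diff_mem[OF one_mem one_mem] by simp

lemma uminus_mem: "x \<in> K \<Longrightarrow> - x \<in> K"
  using diff_mem[OF zero_mem] by simp

lemma add_mem: "x \<in> K \<Longrightarrow> y \<in> K \<Longrightarrow> x + y \<in> K"
  using diff_mem[of x "- y"] uminus_mem[of y] by simp

lemma divide_mem: "x \<in> K \<Longrightarrow> y \<in> K \<Longrightarrow> x / y \<in> K"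
  by (simp add: divide_inverse mult_mem inverse_mem)

lemma power_mem: "x \<in> K \<Longrightarrow> x ^ n \<in> K"
  by (induction n) (simp_all add: mult_mem)

lemma prod_mem: "(\<And>i. i \<in> A \<Longrightarrow> f i \<in> K) \<Longrightarrow> prod f A \<in> K"
  by (induction A rule: infinite_finite_induct) (simp_all add: mult_mem)

lemma of_int_mem: "of_int n \<in> K"
proof -
  have "of_nat m \<in> K" for m
    by (induction m) (simp_all add: add_mem)
  moreover have "n = int (nat n) \<or> n = - int (nat (- n))"
    by arith
  ultimately show ?thesis
    by (metis of_int_of_nat_eq of_int_minus uminus_mem)
qed

lemma power_int_mem: "x \<in> K \<Longrightarrow> x powi n \<in> K"
  by (simp add: power_int_def power_mem inverse_mem)

lemma power_nat_abs_mem_if_power_int_mem: "x powi n \<in> K \<Longrightarrow> x ^ nat \<bar>n\<bar> \<in> K"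
  using inverse_mem[of "x powi n"] by (cases "n \<ge> 0") (auto simp: power_int_def power_inverse)

context
  fixes s :: 'a
  assumes square_mem: "s * s \<in> K"
begin

lemma quad_power_conj:
  assumes "x \<in> K" "y \<in> K"
  shows "\<exists>X\<in>K. \<exists>Y\<in>K. (x + y * s) ^ n = X + Y * s \<and> (x - y * s) ^ n = X - Y * s"
proof (induction n)
  case 0
  then show ?case
    by (intro bexI[of _ 1] bexI[of _ 0]) simp_all
next
  case (Suc n)
  then obtain X Y where XY: "X \<in> K" "Y \<in> K"
    "(x + y * s) ^ n = X + Y * s" "(x - y * s) ^ n = X - Y * s"
    by blast
  have "(x + y * s) ^ Suc n = (x + y * s) * (X + Y * s)"
    "(x - y * s) ^ Suc n = (x - y * s) * (X - Y * s)"
    by (simp_all only: power_Suc XY(3,4))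
  then have "(x + y * s) ^ Suc n = (X * x + Y * y * (s * s)) + (X * y + Y * x) * s"
    "(x - y * s) ^ Suc n = (X * x + Y * y * (s * s)) - (X * y + Y * x) * s"
    by (simp_all add: algebra_simps)
  moreover have "X * x + Y * y * (s * s) \<in> K" "X * y + Y * x \<in> K"
    using XY assms square_mem by (simp_all add: add_mem mult_mem)
  ultimately show ?case
    by blast
qed

context
  assumes not_mem: "s \<notin> K"
begin

lemma quad_coeff_eq_0_if_mem:
  assumes "x \<in> K" "y \<in> K" "x + y * s \<in> K"
  shows "y = 0"
proof (rule ccontr)
  assume "y \<noteq> 0"
  then have "s = (x + y * s - x) / y"
    by simp
  also have "\<dots> \<in> K"
    using assms by (intro divide_mem diff_mem)
  finally show False
    using not_mem by contradiction
qed

lemma quad_norm_neq_0: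
  assumes "x \<in> K" "y \<in> K" "x + y * s \<noteq> 0"
  shows "x * x - y * y * (s * s) \<noteq> 0"
proof
  assume "x * x - y * y * (s * s) = 0"
  then have "(x + - y * s) * (x + y * s) = 0"
    by (simp add: algebra_simps)
  then have "x + - y * s = 0"
    using assms(3) by simp
  then have "- y = 0"
    using quad_coeff_eq_0_if_mem[of x "- y"] assms(1,2) uminus_mem by simp
  then show False
    using \<open>x + - y * s = 0\<close> assms(3) by simp
qed

lemma subfield_set_quad_ext: "subfield_set (quad_ext K s)"
proof
  show "1 \<in> quad_ext K s"
    using quad_ext_memI[of 1 K 0 s] by simp
next
  fix z w assume "z \<in> quad_ext K s" "w \<in> quad_ext K s"
  then obtain x y x' y' where xy: "x \<in> K" "y \<in> K" "z = x + y * s"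
    and xy': "x' \<in> K" "y' \<in> K" "w = x' + y' * s"
    by (auto elim!: quad_ext_memE)
  have "z - w = (x - x') + (y - y') * s"
    using xy xy' by (simp add: algebra_simps)
  also have "\<dots> \<in> quad_ext K s"
    using xy xy' by (simp add: quad_ext_memI diff_mem)
  finally show "z - w \<in> quad_ext K s" .
  have "z * w = (x * x' + y * y' * (s * s)) + (x * y' + y * x') * s"
    using xy xy' by (simp add: algebra_simps)
  also have "\<dots> \<in> quad_ext K s"
    using xy xy' square_mem by (simp add: quad_ext_memI add_mem mult_mem)
  finally show "z * w \<in> quad_ext K s" .
next
  fix z assume "z \<in> quad_ext K s"
  then obtain x y where xy: "x \<in> K" "y \<in> K" "z = x + y * s"
    by (auto elim!: quad_ext_memE)
  show "inverse z \<in> quad_ext K s"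
  proof (cases "z = 0")
    case True
    then show ?thesis
      using quad_ext_memI[of 0 K 0 s] by simp
  next
    case False
    define d where "d = x * x - y * y * (s * s)"
    have "d \<noteq> 0"
      unfolding d_def using quad_norm_neq_0 xy False by simp
    have "x / d + (- y / d) * s = (x - y * s) / d"
      by (simp add: diff_divide_distrib)
    then have "z * (x / d + (- y / d) * s) = (x + y * s) * (x - y * s) / d"
      unfolding xy(3) by simp
    also have "\<dots> = 1"
      using \<open>d \<noteq> 0\<close> unfolding d_def by (simp add: algebra_simps)
    finally have "z * (x / d + (- y / d) * s) = 1" .
    then have "inverse z = x / d + (- y / d) * s"
      by (rule inverse_unique)
    moreover have "d \<in> K"
      unfolding d_def using xy square_mem by (simp add: diff_mem mult_mem)
    ultimately show ?thesis
      using xy by (metis quad_ext_memI divide_mem uminus_mem)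
  qed
qed

lemma quad_power_eq_conj_power_if_mem:
  assumes "x \<in> K" "y \<in> K" "(x + y * s) ^ n \<in> K"
  shows "(x + y * s) ^ n = (x - y * s) ^ n"
proof -
  obtain X Y where XY: "X \<in> K" "Y \<in> K"
    "(x + y * s) ^ n = X + Y * s" "(x - y * s) ^ n = X - Y * s"
    using quad_power_conj assms(1,2) by blast
  then have "Y = 0"
    using quad_coeff_eq_0_if_mem assms(3) by metis
  then show ?thesis
    using XY by simp
qed

lemma quad_ext_sqrt_cases:
  assumes "t \<in> quad_ext K s" "t * t \<in> K" "(2::'a) \<noteq> 0"
  shows "t \<in> K \<or> t * s \<in> K"
proof -
  obtain x y where xy: "x \<in> K" "y \<in> K" "t = x + y * s"
    using assms(1) by (auto elim!: quad_ext_memE)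
  have "t * t = (x * x + y * y * (s * s)) + (2 * x * y) * s"
    unfolding xy(3) by (simp add: algebra_simps)
  moreover have "2 \<in> K"
    using of_int_mem[of 2] by simp
  ultimately have "2 * x * y = 0"
    using quad_coeff_eq_0_if_mem[of "x * x + y * y * (s * s)" "2 * x * y"] assms(2) xy square_mem
    by (simp add: add_mem mult_mem)
  then have "x = 0 \<or> y = 0"
    using assms(3) by simp
  then show ?thesis
  proof
    assume "x = 0"
    then have "t * s = y * (s * s)"
      using xy(3) by (simp add: algebra_simps)
    also have "\<dots> \<in> K"
      using xy(2) square_mem by (rule mult_mem)
    finally show ?thesis ..
  qed (use xy in simp)
qed

end

end

end

lemma subfield_set_Rats: "subfield_set (\<rat> :: 'a :: field_char_0 set)"
  by unfold_locales auto

lemma Rats_subset_subfield_set: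
  fixes K :: "'a :: field_char_0 set"
  assumes "subfield_set K"
  shows "\<rat> \<subseteq> K"
proof
  fix r :: 'a assume "r \<in> \<rat>"
  then obtain a b where "r = of_int a / of_int b"
    by (auto elim: Rats_cases')
  then show "r \<in> K"
    using subfield_set.divide_mem[OF assms] subfield_set.of_int_mem[OF assms] by simp
qed

lemma Im_eq_0_if_Rats: "(z :: complex) \<in> \<rat> \<Longrightarrow> Im z = 0"
  by (auto elim!: Rats_cases' simp: Im_divide)

lemma square_if_sqrt_of_nat_in_Rats:
  assumes "sqrt (real n) \<in> \<rat>"
  shows "is_square n"
proof -
  obtain a b :: nat where "b \<noteq> 0" "coprime a b" and ab: "\<bar>sqrt (real n)\<bar> = real a / real b"
    using Rats_abs_nat_div_natE[OF assms] by metis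
  have "real n = sqrt (real n) ^ 2"
    by simp
  also have "\<dots> = (real a / real b) ^ 2"
    using ab by simp
  finally have "real (n * b ^ 2) = real (a ^ 2)"
    using \<open>b \<noteq> 0\<close> by (simp add: field_simps)
  then have nab: "n * b ^ 2 = a ^ 2"
    by (simp only: of_nat_eq_iff)
  have "coprime (b ^ 2) (a ^ 2)"
    using \<open>coprime a b\<close> by (simp add: coprime_commute)
  moreover have "b ^ 2 dvd a ^ 2"
    unfolding nab[symmetric] by simp
  ultimately have "b = 1"
    using coprime_common_divisor[of "b ^ 2" "a ^ 2" "b ^ 2"] by simp
  then show ?thesis
    using nab by (auto intro: is_nth_powerI)
qed

lemma of_real_sqrt_mult_self: "of_real (sqrt (real m)) * of_real (sqrt (real m)) = (of_nat m :: complex)"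
  by (simp flip: of_real_mult)

fun sqrt_tower :: "nat list \<Rightarrow> complex set" where
  "sqrt_tower [] = quad_ext \<rat> \<i>"
| "sqrt_tower (m # ms) = quad_ext (sqrt_tower ms) (of_real (sqrt (real m)))"

lemma Rats_subset_sqrt_tower: "\<rat> \<subseteq> sqrt_tower ms"
proof (induction ms)
  case Nil
  then show ?case
    by (simp add: subset_quad_ext)
next
  case (Cons m ms)
  then have "0 \<in> sqrt_tower ms"
    by auto
  then have "sqrt_tower ms \<subseteq> sqrt_tower (m # ms)"
    by (simp add: subset_quad_ext)
  with Cons.IH show ?case
    by (rule subset_trans)
qed

lemma sqrt_tower_subset_Cons: "sqrt_tower ms \<subseteq> sqrt_tower (m # ms)"
  using subsetD[OF Rats_subset_sqrt_tower Rats_0] by (simp add: subset_quad_ext)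

lemma generator_in_sqrt_tower_Cons: "of_real (sqrt (real m)) \<in> sqrt_tower (m # ms)"
  using subsetD[OF Rats_subset_sqrt_tower Rats_0] subsetD[OF Rats_subset_sqrt_tower Rats_1]
  by (simp add: generator_in_quad_ext)

lemma imaginary_unit_in_sqrt_tower: "\<i> \<in> sqrt_tower ms"
proof (induction ms)
  case Nil
  then show ?case
    by (simp add: generator_in_quad_ext)
next
  case (Cons m ms)
  then show ?case
    using sqrt_tower_subset_Cons by blast
qed

lemma sqrt_in_sqrt_tower: "m \<in> set ms \<Longrightarrow> of_real (sqrt (real m)) \<in> sqrt_tower ms"
proof (induction ms)
  case (Cons m' ms)
  show ?case
  proof (cases "m = m'")
    case True
    then show ?thesis
      by (simp only: generator_in_sqrt_tower_Cons)
  next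
    case False
    then have "of_real (sqrt (real m)) \<in> sqrt_tower ms"
      using Cons by simp
    then show ?thesis
      by (rule subsetD[OF sqrt_tower_subset_Cons])
  qed
qed simp

lemma imaginary_unit_notin_Rats: "\<i> \<notin> \<rat>"
  using Im_eq_0_if_Rats[of \<i>] by auto

lemma subfield_set_gaussian_rationals: "subfield_set (quad_ext \<rat> \<i>)"
  by (rule subfield_set.subfield_set_quad_ext[OF subfield_set_Rats]) (simp_all add: imaginary_unit_notin_Rats)

lemma sqrt_nat_notin_gaussian_rationals:
  assumes "\<not> is_square m"
  shows "of_real (sqrt (real m)) \<notin> quad_ext \<rat> \<i>"
proof
  have "\<i> * \<i> \<in> (\<rat> :: complex set)"
    by simp
  note sqrt_cases = subfield_set.quad_ext_sqrt_cases[OF subfield_set_Rats this imaginary_unit_notin_Rats]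
  assume "of_real (sqrt (real m)) \<in> quad_ext \<rat> \<i>"
  then have "of_real (sqrt (real m)) \<in> (\<rat> :: complex set) \<or> of_real (sqrt (real m)) * \<i> \<in> (\<rat> :: complex set)"
    using sqrt_cases[of "of_real (sqrt (real m))"] by (simp add: of_real_sqrt_mult_self)
  then show False
  proof
    assume "of_real (sqrt (real m)) \<in> (\<rat> :: complex set)"
    then show False
      using square_if_sqrt_of_nat_in_Rats assms by simp
  next
    assume "of_real (sqrt (real m)) * \<i> \<in> (\<rat> :: complex set)"
    then have "sqrt (real m) = 0"
      using Im_eq_0_if_Rats[of "of_real (sqrt (real m)) * \<i>"] by simp
    then show False
      using assms by simp
  qed
qed

lemma sqrt_tower_subfield_and_sqrt_notin:
  assumes "sorted_wrt coprime ms" "\<forall>m\<in>set ms. \<not> is_square m"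
  shows "subfield_set (sqrt_tower ms) \<and>
    (\<forall>m. \<not> is_square m \<and> (\<forall>m'\<in>set ms. coprime m m') \<longrightarrow> of_real (sqrt (real m)) \<notin> sqrt_tower ms)"
  using assms
proof (induction ms)
  case Nil
  then show ?case
    using subfield_set_gaussian_rationals sqrt_nat_notin_gaussian_rationals by simp
next
  case (Cons m ms)
  define K where "K = sqrt_tower ms"
  define s where "s = complex_of_real (sqrt (real m))"
  have IH: "subfield_set K \<and>
      (\<forall>m'. \<not> is_square m' \<and> (\<forall>m''\<in>set ms. coprime m' m'') \<longrightarrow> of_real (sqrt (real m')) \<notin> K)"
    unfolding K_def using Cons.prems by (intro Cons.IH) simp_all
  then have K: "subfield_set K"
    and notin: "\<And>m'. \<not> is_square m' \<Longrightarrow> \<forall>m''\<in>set ms. coprime m' m'' \<Longrightarrow> of_real (sqrt (real m')) \<notin> K"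
    by blast+
  have s: "s * s \<in> K" "s \<notin> K"
    unfolding s_def of_real_sqrt_mult_self K_def
    using subsetD[OF Rats_subset_sqrt_tower] notin[unfolded K_def] Cons.prems by simp_all
  note quad = subfield_set.subfield_set_quad_ext[OF K s] subfield_set.quad_ext_sqrt_cases[OF K s]
  \<comment> \<open>sqrt m' in K(s) would put sqrt m' or sqrt (m' * m) into K, against the induction hypothesis.\<close>
  have "of_real (sqrt (real m')) \<notin> quad_ext K s"
    if m': "\<not> is_square m'" "\<forall>m''\<in>set (m # ms). coprime m' m''" for m'
  proof
    assume "of_real (sqrt (real m')) \<in> quad_ext K s"
    moreover have "of_real (sqrt (real m')) * of_real (sqrt (real m')) \<in> K"
      unfolding of_real_sqrt_mult_self K_def by (rule subsetD[OF Rats_subset_sqrt_tower]) simp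
    ultimately have "of_real (sqrt (real m')) \<in> K \<or> of_real (sqrt (real m')) * s \<in> K"
      by (rule quad(2)) simp
    moreover have "of_real (sqrt (real m')) * s = of_real (sqrt (real (m' * m)))"
      unfolding s_def by (simp add: real_sqrt_mult)
    ultimately have "of_real (sqrt (real m')) \<in> K \<or> of_real (sqrt (real (m' * m))) \<in> K"
      by simp
    moreover have "\<not> is_square (m' * m)"
      using m' Cons.prems by (simp add: is_nth_power_mult_coprime_nat_iff)
    moreover have "\<forall>m''\<in>set ms. coprime (m' * m) m''"
      using m' Cons.prems by simp
    ultimately show False
      using notin[of m'] notin[of "m' * m"] m' by auto
  qed
  then show ?case
    using quad(1) unfolding sqrt_tower.simps(2) K_def[symmetric] s_def[symmetric] by blast
qed

lemma coprime_mersenne: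
  assumes "coprime a b"
  shows "coprime (2 ^ a - 1 :: nat) (2 ^ b - 1)"
proof -
  define d where "d = gcd (2 ^ a - 1 :: nat) (2 ^ b - 1)"
  have "[2 ^ a = 1] (mod d)" "[2 ^ b = 1] (mod d)"
    unfolding d_def by (auto simp: cong_altdef_nat Suc_leI)
  then have "ord d 2 dvd gcd a b"
    by (simp add: ord_divides')
  then have "[2 = 1] (mod d)"
    using assms ord_divides[of 2 1 d] by simp
  then have "d dvd 1"
    using cong_to_1_nat by fastforce
  then show ?thesis
    by (simp add: d_def coprime_iff_gcd_eq_1)
qed

lemma not_square_mersenne:
  assumes "2 \<le> q"
  shows "\<not> is_square (2 ^ q - 1 :: nat)"
proof
  assume "is_square (2 ^ q - 1 :: nat)"
  then obtain k :: nat where k: "2 ^ q - 1 = k ^ 2"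
    by (auto elim: is_nth_powerE)
  obtain r where "q = r + 2"
    using assms le_Suc_ex by (metis add.commute)
  then have "(2::nat) ^ q = 4 * 2 ^ r"
    by (simp add: power_add)
  then have "k ^ 2 + 1 = 4 * 2 ^ r"
    using k one_le_power[of "2::nat" q] by linarith
  show False
  proof (cases "even k")
    case True
    have "even (k ^ 2 + 1)"
      unfolding \<open>k ^ 2 + 1 = 4 * 2 ^ r\<close> by simp
    then show False
      using True by simp
  next
    case False
    then obtain j where "k = 2 * j + 1"
      using oddE by blast
    then have "4 * (j ^ 2 + j) + 2 = 4 * 2 ^ r"
      using \<open>k ^ 2 + 1 = 4 * 2 ^ r\<close> by (simp add: power2_eq_square algebra_simps)
    then show False
      by presburger
  qed
qed

lemma sorted_wrt_coprime_mersenne: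
  assumes "finite R" "\<forall>r\<in>R. prime r"
  shows "sorted_wrt coprime (map (\<lambda>r. 2 ^ r - 1 :: nat) (sorted_list_of_set R))"
  unfolding sorted_wrt_map
proof (rule sorted_wrt_mono_rel[OF _ strict_sorted_list_of_set])
  fix r r' assume "r \<in> set (sorted_list_of_set R)" "r' \<in> set (sorted_list_of_set R)" "r < r'"
  then show "coprime (2 ^ r - 1 :: nat) (2 ^ r' - 1)"
    using assms by (intro coprime_mersenne primes_coprime) auto
qed

lemma Re_gamma_p [simp]: "Re (gamma_p p) = sqrt (2 ^ p - 1) / 2 ^ (p - 1)"
  and Im_gamma_p [simp]: "Im (gamma_p p) = (2 ^ (p - 1) - 1) / 2 ^ (p - 1)"
  by (simp_all add: gamma_p_def)

lemma gamma_p_mult_cnj: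
  assumes "1 \<le> p"
  shows "gamma_p p * cnj (gamma_p p) = 1"
proof -
  obtain r where p: "p = Suc r"
    using assms by (cases p) auto
  define c :: real where "c = 2 ^ r"
  have "c \<ge> 1"
    unfolding c_def by simp
  have "Re (gamma_p p) = sqrt (2 * c - 1) / c" "Im (gamma_p p) = (c - 1) / c"
    by (simp_all add: p c_def)
  then have "Re (gamma_p p) ^ 2 + Im (gamma_p p) ^ 2 = ((2 * c - 1) + (c - 1) ^ 2) / c ^ 2"
    using \<open>c \<ge> 1\<close> by (simp add: power_divide add_divide_distrib)
  also have "\<dots> = 1"
    using \<open>c \<ge> 1\<close> by (simp add: power2_eq_square algebra_simps)
  finally show ?thesis
    by (simp add: complex_mult_cnj)
qed

lemma gamma_p_nonzero: "1 \<le> p \<Longrightarrow> gamma_p p \<noteq> 0"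
  using gamma_p_mult_cnj by force

lemma gamma_p_quadratic_form:
  assumes "subfield_set K" "\<i> \<in> K"
  obtains x y where "x \<in> K" "y \<in> K"
    "gamma_p p = x + y * of_real (sqrt (2 ^ p - 1))"
    "- cnj (gamma_p p) = x - y * of_real (sqrt (2 ^ p - 1))"
proof
  note Rats_K = Rats_subset_subfield_set[OF assms(1)]
  have "of_real ((2 ^ (p - 1) - 1) / 2 ^ (p - 1)) \<in> K"
    by (rule subsetD[OF Rats_K]) simp
  then show "\<i> * of_real ((2 ^ (p - 1) - 1) / 2 ^ (p - 1)) \<in> K"
    by (rule subfield_set.mult_mem[OF assms])
  show "of_real (1 / 2 ^ (p - 1)) \<in> K"
    by (rule subsetD[OF Rats_K]) simp
qed (simp_all add: gamma_p_def complex_eq_iff)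

fun lucas_V :: "int \<Rightarrow> int \<Rightarrow> nat \<Rightarrow> int" where
  "lucas_V a b 0 = 2"
| "lucas_V a b (Suc 0) = a"
| "lucas_V a b (Suc (Suc n)) = a * lucas_V a b (Suc n) - b * lucas_V a b n"

lemma lucas_V_eq_power_sum:
  fixes \<alpha> \<beta> :: "'a :: comm_ring_1"
  assumes "\<alpha> + \<beta> = of_int a" "\<alpha> * \<beta> = of_int b"
  shows "of_int (lucas_V a b n) = \<alpha> ^ n + \<beta> ^ n"
  using assms
proof (induction a b n rule: lucas_V.induct)
  case (3 a b n)
  have "\<alpha> ^ Suc (Suc n) + \<beta> ^ Suc (Suc n)
      = (\<alpha> + \<beta>) * (\<alpha> ^ Suc n + \<beta> ^ Suc n) - \<alpha> * \<beta> * (\<alpha> ^ n + \<beta> ^ n)"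
    by (simp add: algebra_simps)
  then show ?case
    using 3 by simp
qed simp_all

lemma odd_lucas_V: "odd a \<Longrightarrow> even b \<Longrightarrow> odd (lucas_V a b (Suc n))"
  by (induction n) simp_all

lemma unimodular_not_root_of_unity:
  fixes w :: complex
  assumes "w * cnj w = 1" and "(w + cnj w) * of_int d = of_int a"
    and "odd a" and "even d" and "0 < M"
  shows "w ^ M \<noteq> 1"
proof
  assume "w ^ M = 1"
  then have "cnj w ^ M = 1"
    by (metis complex_cnj_one complex_cnj_power)
  have "of_int (lucas_V a (d ^ 2) M) = (w * of_int d) ^ M + (cnj w * of_int d) ^ M"
  proof (rule lucas_V_eq_power_sum)
    show "w * of_int d + cnj w * of_int d = of_int a"
      using assms(2) by (simp add: algebra_simps)
    show "w * of_int d * (cnj w * of_int d) = of_int (d ^ 2)"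
      using assms(1) by (simp add: algebra_simps power2_eq_square)
  qed
  also have "\<dots> = of_int (2 * d ^ M)"
    using \<open>w ^ M = 1\<close> \<open>cnj w ^ M = 1\<close> by (simp add: power_mult_distrib)
  finally have "lucas_V a (d ^ 2) M = 2 * d ^ M"
    by (simp only: of_int_eq_iff)
  moreover obtain n where "M = Suc n"
    using assms(5) gr0_implies_Suc by blast
  ultimately show False
    using odd_lucas_V[of a "d ^ 2" n] assms(3,4) by simp
qed

lemma gamma_p_not_root_of_unity:
  assumes "3 \<le> p" and "0 < M"
  shows "gamma_p p ^ M \<noteq> 1"
proof -
  obtain r where p: "p = r + 3"
    using assms(1) by (metis add.commute le_Suc_ex)
  define c :: real where "c = 2 ^ r"
  \<comment> \<open>The trace of gamma_p p is irrational, that of its square is a rational with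
    odd numerator and even denominator.\<close>
  define w where "w = gamma_p p ^ 2"
  have "c \<ge> 1"
    unfolding c_def by simp
  then have sqrt_sq: "sqrt (8 * c - 1) ^ 2 = 8 * c - 1"
    by simp
  have Re: "Re (gamma_p p) = sqrt (8 * c - 1) / (4 * c)" and Im: "Im (gamma_p p) = (4 * c - 1) / (4 * c)"
    by (simp_all add: p c_def power_add)
  have "w * cnj w = 1"
    unfolding w_def using gamma_p_mult_cnj[of p] assms(1)
    by (simp add: power2_eq_square algebra_simps)
  moreover have "(w + cnj w) * of_int (4 * (2 ^ r) ^ 2) = of_int (8 * 2 ^ r - 1 - 8 * (2 ^ r) ^ 2)"
  proof -
    have "Re w = (8 * c - 1 - (4 * c - 1) ^ 2) / (16 * c ^ 2)"
      unfolding w_def Re_power2 Re Im power_divide sqrt_sq using \<open>c \<ge> 1\<close> by (simp add: field_simps)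
    then have "2 * Re w * (4 * c ^ 2) = 8 * c - 1 - 8 * c ^ 2"
      using \<open>c \<ge> 1\<close> by (simp add: field_simps power2_eq_square)
    then show ?thesis
      unfolding complex_add_cnj c_def by (simp add: complex_eq_iff)
  qed
  ultimately have "w ^ M \<noteq> 1"
    by (rule unimodular_not_root_of_unity) (simp_all add: assms(2))
  then show ?thesis
    unfolding w_def by (metis power_mult power_mult_distrib power_one mult.commute)
qed

lemma gamma_p_power_notin_subfield:
  assumes K: "subfield_set K" "\<i> \<in> K"
    and notin: "of_real (sqrt (2 ^ p - 1)) \<notin> K"
    and "3 \<le> p" "0 < N"
  shows "gamma_p p ^ N \<notin> K"
proof
  assume mem: "gamma_p p ^ N \<in> K"
  define s :: complex where "s = of_real (sqrt (2 ^ p - 1))"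
  have "s * s \<in> K"
    unfolding s_def using Rats_subset_subfield_set[OF K(1)] \<open>3 \<le> p\<close> by (auto simp flip: of_real_mult)
  obtain x y where "x \<in> K" "y \<in> K" and xy: "gamma_p p = x + y * s" "- cnj (gamma_p p) = x - y * s"
    using gamma_p_quadratic_form[OF K] unfolding s_def by metis
  \<comment> \<open>Conjugating s to - s over K fixes gamma_p p ^ N and maps gamma_p p to - cnj (gamma_p p).\<close>
  then have conj: "gamma_p p ^ N = (- cnj (gamma_p p)) ^ N"
    using subfield_set.quad_power_eq_conj_power_if_mem[OF K(1) \<open>s * s \<in> K\<close> notin[folded s_def]] mem
    by simp
  have "gamma_p p ^ (2 * N) = gamma_p p ^ N * (- cnj (gamma_p p)) ^ N"
    by (metis conj mult_2 power_add)
  also have "\<dots> = (- (gamma_p p * cnj (gamma_p p))) ^ N"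
    by (simp flip: power_mult_distrib)
  also have "\<dots> = (- 1) ^ N"
    using gamma_p_mult_cnj[of p] \<open>3 \<le> p\<close> by simp
  finally have square: "gamma_p p ^ (2 * N) = (- 1) ^ N" .
  have "gamma_p p ^ (4 * N) = gamma_p p ^ (2 * N) * gamma_p p ^ (2 * N)"
    by (simp flip: power_add)
  also have "\<dots> = 1"
    unfolding square by (simp flip: power_mult_distrib)
  finally show False
    using gamma_p_not_root_of_unity[of p "4 * N"] \<open>3 \<le> p\<close> \<open>0 < N\<close> by simp
qed

lemma subfield_separating_gamma_p:
  assumes "finite R" "\<forall>r\<in>R. prime r" "prime p" "p \<notin> R"
  obtains K where "subfield_set K" "\<i> \<in> K"
    "\<forall>r\<in>R. gamma_p r \<in> K" "of_real (sqrt (2 ^ p - 1)) \<notin> K"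
proof
  define ms where "ms = map (\<lambda>r. 2 ^ r - 1 :: nat) (sorted_list_of_set R)"
  define K where "K = sqrt_tower ms"
  have real_mersenne: "real (2 ^ r - 1 :: nat) = 2 ^ r - 1" for r
    by (simp add: of_nat_diff)
  have set_ms: "set ms = (\<lambda>r. 2 ^ r - 1) ` R"
    unfolding ms_def using assms(1) by simp
  have "sorted_wrt coprime ms"
    unfolding ms_def using assms(1,2) by (rule sorted_wrt_coprime_mersenne)
  moreover have "\<forall>m\<in>set ms. \<not> is_square m"
    unfolding set_ms using assms(2) not_square_mersenne prime_ge_2_nat by blast
  ultimately have K: "subfield_set K"
    and K_notin: "\<And>m. \<not> is_square m \<Longrightarrow> \<forall>m'\<in>set ms. coprime m m' \<Longrightarrow> of_real (sqrt (real m)) \<notin> K"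
    using sqrt_tower_subfield_and_sqrt_notin unfolding K_def by blast+
  show "subfield_set K"
    by (rule K)
  show "\<i> \<in> K"
    unfolding K_def by (rule imaginary_unit_in_sqrt_tower)
  show "\<forall>r\<in>R. gamma_p r \<in> K"
  proof
    fix r assume "r \<in> R"
    then have "of_real (sqrt (2 ^ r - 1)) \<in> K"
      unfolding K_def using sqrt_in_sqrt_tower[of "2 ^ r - 1" ms] set_ms real_mersenne by simp
    moreover obtain x y where "x \<in> K" "y \<in> K" "gamma_p r = x + y * of_real (sqrt (2 ^ r - 1))"
      using gamma_p_quadratic_form[OF K \<open>\<i> \<in> K\<close>] by metis
    ultimately show "gamma_p r \<in> K"
      using K by (simp add: subfield_set.add_mem subfield_set.mult_mem)
  qed
  have "\<not> is_square (2 ^ p - 1 :: nat)"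
    using assms(3) by (intro not_square_mersenne prime_ge_2_nat)
  moreover have "\<forall>m\<in>set ms. coprime (2 ^ p - 1 :: nat) m"
  proof
    fix m assume "m \<in> set ms"
    then obtain r where "r \<in> R" "m = 2 ^ r - 1"
      unfolding set_ms by blast
    moreover from \<open>r \<in> R\<close> have "coprime p r"
      using assms(2-4) by (intro primes_coprime) auto
    ultimately show "coprime (2 ^ p - 1 :: nat) m"
      using coprime_mersenne by blast
  qed
  ultimately show "of_real (sqrt (2 ^ p - 1)) \<notin> K"
    using K_notin real_mersenne by metis
qed

lemma gamma_p_relation_exponent_eq_0:
  assumes "finite P" "\<forall>r\<in>P. prime r" "(\<Prod>r\<in>P. gamma_p r powi n r) = 1" "p \<in> P" "3 \<le> p"
  shows "n p = 0"
proof -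
  obtain K where K: "subfield_set K" "\<i> \<in> K"
    and others: "\<forall>r\<in>P - {p}. gamma_p r \<in> K" and notin: "of_real (sqrt (2 ^ p - 1)) \<notin> K"
    using subfield_separating_gamma_p[of "P - {p}" p] assms by auto
  define Q where "Q = (\<Prod>r\<in>P - {p}. gamma_p r powi n r)"
  have "Q \<in> K"
    unfolding Q_def using others K(1) by (auto intro: subfield_set.prod_mem subfield_set.power_int_mem)
  have "gamma_p p powi n p * Q = 1"
    unfolding Q_def using assms(3) prod.remove[OF assms(1,4), of "\<lambda>r. gamma_p r powi n r"] by simp
  then have "gamma_p p powi n p = inverse Q"
    by (intro inverse_unique[symmetric]) (simp add: mult.commute)
  then have "gamma_p p ^ nat \<bar>n p\<bar> \<in> K"
    using \<open>Q \<in> K\<close> K(1) by (simp add: subfield_set.inverse_mem subfield_set.power_nat_abs_mem_if_power_int_mem)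
  then have "\<not> 0 < nat \<bar>n p\<bar>"
    using gamma_p_power_notin_subfield[OF K notin \<open>3 \<le> p\<close>] by blast
  then show ?thesis
    by simp
qed

lemma common_denominator:
  fixes q :: "'a \<Rightarrow> rat"
  assumes "finite P"
  obtains d :: int and n :: "'a \<Rightarrow> int" where "0 < d" "\<forall>p\<in>P. q p * of_int d = of_int (n p)"
proof
  define num where "num p = fst (quotient_of (q p))" for p
  define den where "den p = snd (quotient_of (q p))" for p
  have den_pos: "0 < den p" for p
    unfolding den_def by (rule quotient_of_denom_pos')
  have q: "q p = of_int (num p) / of_int (den p)" for p
    unfolding num_def den_def by (rule quotient_of_div) simp
  show "0 < (\<Prod>p\<in>P. den p)"
    using den_pos by (simp add: prod_pos)
  show "\<forall>p\<in>P. q p * of_int (\<Prod>p\<in>P. den p) = of_int (num p * (\<Prod>r\<in>P - {p}. den r))"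
  proof
    fix p assume "p \<in> P"
    then have "(\<Prod>p\<in>P. den p) = den p * (\<Prod>r\<in>P - {p}. den r)"
      using prod.remove[OF assms] by blast
    then show "q p * of_int (\<Prod>p\<in>P. den p) = of_int (num p * (\<Prod>r\<in>P - {p}. den r))"
      using den_pos[of p] unfolding q by simp
  qed
qed

lemma int_relation_of_rat_relation:
  fixes q :: "'a \<Rightarrow> rat" and z :: "'a \<Rightarrow> 'b :: field_char_0"
  assumes "finite P" "(\<Sum>p\<in>P. of_rat (q p) * z p) = 0"
  obtains n :: "'a \<Rightarrow> int" where "\<forall>p\<in>P. n p = 0 \<longrightarrow> q p = 0" "(\<Sum>p\<in>P. of_int (n p) * z p) = 0"
proof -
  obtain d n where "0 < d" and n: "\<forall>p\<in>P. q p * of_int d = of_int (n p)"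
    by (rule common_denominator[OF assms(1)])
  have "(of_int (n p) :: 'b) = of_int d * of_rat (q p)" if "p \<in> P" for p
    using n that by (metis mult.commute of_rat_mult of_rat_of_int_eq)
  then have "(\<Sum>p\<in>P. of_int (n p) * z p) = of_int d * (\<Sum>p\<in>P. of_rat (q p) * z p)"
    unfolding sum_distrib_left by (simp add: mult.assoc)
  then have "(\<Sum>p\<in>P. of_int (n p) * z p) = 0"
    using assms(2) by simp
  moreover have "\<forall>p\<in>P. n p = 0 \<longrightarrow> q p = 0"
  proof (intro ballI impI)
    fix p assume "p \<in> P" "n p = 0"
    then have "q p * of_int d = 0"
      using n by simp
    then show "q p = 0"
      using \<open>0 < d\<close> by simp
  qed
  ultimately show thesis
    using that by blast
qed

lemma prod_power_int_eq_1_if_sum_Ln_eq_0: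
  fixes z :: "'a \<Rightarrow> complex"
  assumes "finite P" "\<forall>p\<in>P. z p \<noteq> 0" "(\<Sum>p\<in>P. of_int (n p) * Ln (z p)) = 0"
  shows "(\<Prod>p\<in>P. z p powi n p) = 1"
proof -
  have "(\<Prod>p\<in>P. z p powi n p) = (\<Prod>p\<in>P. exp (of_int (n p) * Ln (z p)))"
    using assms(2) by (intro prod.cong) (simp_all flip: exp_power_int)
  also have "\<dots> = exp (\<Sum>p\<in>P. of_int (n p) * Ln (z p))"
    using assms(1) by (simp add: exp_sum)
  finally show ?thesis
    using assms(3) by simp
qed

lemma Ln_gamma_p_neq_0:
  assumes "2 \<le> p"
  shows "Ln (gamma_p p) \<noteq> 0"
proof
  assume "Ln (gamma_p p) = 0"
  have "gamma_p p = exp (Ln (gamma_p p))"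
    using gamma_p_nonzero[of p] assms by simp
  then have "gamma_p p = 1"
    using \<open>Ln (gamma_p p) = 0\<close> by simp
  moreover have "Im (gamma_p p) > 0"
    using assms by (simp add: divide_pos_pos) 
  ultimately show False
    by simp
qed

theorem mainTheorem10:
  fixes P :: "nat set" and q :: "nat \<Rightarrow> rat"
  assumes "finite P" and "\<forall>p\<in>P. prime p"
    and "(\<Sum>p\<in>P. of_rat (q p) * Ln (gamma_p p)) = (0::complex)"
  shows "\<forall>p\<in>P. q p = 0"
proof -
  obtain n where n: "\<forall>p\<in>P. n p = 0 \<longrightarrow> q p = 0"
    and sum_0: "(\<Sum>p\<in>P. of_int (n p) * Ln (gamma_p p)) = 0"
    using int_relation_of_rat_relation[OF assms(1,3)] by blast
  have "\<forall>p\<in>P. gamma_p p \<noteq> 0"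
    using assms(2) gamma_p_nonzero prime_ge_1_nat by blast
  then have "(\<Prod>p\<in>P. gamma_p p powi n p) = 1"
    by (rule prod_power_int_eq_1_if_sum_Ln_eq_0[OF assms(1) _ sum_0])
  then have odd_0: "n p = 0" if "p \<in> P" "p \<noteq> 2" for p
  proof (rule gamma_p_relation_exponent_eq_0[OF assms(1,2) _ \<open>p \<in> P\<close>])
    show "3 \<le> p"
      using prime_ge_2_nat[of p] assms(2) that by fastforce
  qed
  \<comment> \<open>gamma_p 2 is a sixth root of unity, so here the logarithm itself is needed.\<close>
  have "n 2 = 0" if "2 \<in> P"
  proof -
    have "(\<Sum>p\<in>P - {2}. of_int (n p) * Ln (gamma_p p)) = (0::complex)"
      using odd_0 by (intro sum.neutral) auto
    then have "of_int (n 2) * Ln (gamma_p 2) = 0"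
      using sum_0 sum.remove[OF assms(1) that, of "\<lambda>p. of_int (n p) * Ln (gamma_p p)"] by simp
    then show "n 2 = 0"
      using Ln_gamma_p_neq_0[of 2] by simp
  qed
  then show ?thesis
    using n odd_0 by metis
qed

end
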